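(* Let $\lambda_b>0$, $\alpha>2$, $P>0$, $N>0$, $M\ge 1$ and $\mu\in[1,2]$. Let $(X_{11},X_{21})$ have joint probability density $(2\pi\lambda_b)^2x_{11}x_{21}e^{-\pi\lambda_b x_{21}^2}$ for $0<x_{11}<x_{21}$ and $0$ otherwise, and let $\mathbb{A}_{UE}=\{X_{11}\le M^{\frac{1}{\alpha\mu}}(N/P)^{\frac{2-\mu}{\alpha\mu}}X_{21}^{2/\mu}\}$. Then the probability density function of $X_{11}$ conditioned on $\mathbb{A}_{UE}$ is, for $x_{11}>0$, $$f_{X_{11}}(x_{11}\mid\mathbb{A}_{UE})=\frac{2\pi\lambda_b\,x_{11}\,\exp\!\Big(-\pi\lambda_b\max^2\Big(x_{11},\,x_{11}^{\mu/2}\big(\tfrac{P}{N}\big)^{\frac{2-\mu}{2\alpha}}\big(\tfrac{1}{M}\big)^{\frac{1}{2\alpha}}\Big)\Big)}{\mathbb{P}[\mathbb{A}_{UE}]},$$ where $\max^2(a,b)=(\max(a,b))^2$ and $\mathbb{P}[\mathbb{A}_{UE}]=\int_0^\infty 2(\pi\lambda_b)^2x_{21}e^{-\pi\lambda_b x_{21}^2}\min^2\big(x_{21},M^{\frac{1}{\alpha\mu}}(N/P)^{\frac{2-\mu}{\alpha\mu}}x_{21}^{2/\mu}\big)\,\mathrm{d}x_{21}$.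
   Context: This models a downlink cellular network (base stations of density $\lambda_b$, transmit power $P$, noise power $N$, path-loss exponent $\alpha$) with a scheduling rule based on the "treating interference as noise" condition with design parameters $M,\mu$: $X_{11}$ is the serving distance of the typical user, $X_{21}$ its distance to the most interfering base station, and $\mathbb{A}_{UE}$ the event that the typical user is scheduled. The joint density is the model assumed by the paper. *)

theory Defs
  imports "HOL-Probability.Probability"
begin

definition joint_pdf :: "real \<Rightarrow> real \<times> real \<Rightarrow> ennreal" where
  "joint_pdf lb = (\<lambda>(x11, x21).
     if 0 < x11 \<and> x11 < x21
     then ennreal ((2 * pi * lb)^2 * x11 * x21 * exp (- pi * lb * x21^2))
     else 0)"

definition sched_coef :: "real \<Rightarrow> real \<Rightarrow> real \<Rightarrow> real \<Rightarrow> real \<Rightarrow> real" where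
  "sched_coef \<alpha> P N M \<mu> = M powr (1 / (\<alpha> * \<mu>)) * (N / P) powr ((2 - \<mu>) / (\<alpha> * \<mu>))"

end

theory Submission
  imports Defs "HOL-Real_Asymp.Real_Asymp"
begin

text \<open>
  Condition on \<open>X\<^sub>2\<^sub>1 = y\<close> (resp. \<open>X\<^sub>1\<^sub>1 = x\<close>) and integrate the joint density over the
  corresponding slice of the scheduling event. For fixed \<open>y\<close>, the density is linear in
  \<open>x \<in> (0, y)\<close> and the event cuts off at \<open>c y\<^bsup>2/\<mu>\<^esup>\<close> (\<open>c = sched_coef \<alpha> P N M \<mu>\<close>), giving \<open>P[A\<^sub>U\<^sub>E]\<close>. For fixed \<open>x\<close>,
  the event reads \<open>y \<ge> (x/c)\<^bsup>\<mu>/2\<^esup>\<close>, so together with \<open>y > x\<close> the \<open>y\<close>-integral is a Gaussian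
  tail from \<open>max(x, (x/c)\<^bsup>\<mu>/2\<^esup>)\<close>, which gives the numerator of the conditional density.
\<close>

lemma le_mult_powr_iff:
  fixes x y c p :: real
  assumes "x > 0" "y > 0" "c > 0" "p > 0"
  shows "x \<le> c * y powr p \<longleftrightarrow> (x / c) powr (1 / p) \<le> y"
proof -
  have "x \<le> c * y powr p \<longleftrightarrow> x / c \<le> y powr p"
    using assms by (simp add: field_simps)
  also have "\<dots> \<longleftrightarrow> (x / c) powr (1 / p) \<le> y"
  proof
    assume "x / c \<le> y powr p"
    then have "(x / c) powr (1 / p) \<le> (y powr p) powr (1 / p)"
      by (intro powr_mono2) (use assms in auto)
    then show "(x / c) powr (1 / p) \<le> y"
      using assms by (simp add: powr_powr)
  next
    assume "(x / c) powr (1 / p) \<le> y"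
    then have "((x / c) powr (1 / p)) powr p \<le> y powr p"
      by (intro powr_mono2) (use assms in auto)
    then show "x / c \<le> y powr p"
      using assms by (simp add: powr_powr)
  qed
  finally show ?thesis .
qed

lemma divide_sched_coef_powr:
  assumes "x > 0" "\<alpha> > 0" "P > 0" "N > 0" "M > 0" "\<mu> > 0"
  shows "(x / sched_coef \<alpha> P N M \<mu>) powr (\<mu> / 2)
           = x powr (\<mu> / 2) * (P / N) powr ((2 - \<mu>) / (2 * \<alpha>)) * (1 / M) powr (1 / (2 * \<alpha>))"
proof -
  have exponents: "1 / (\<alpha> * \<mu>) * (\<mu> / 2) = 1 / (2 * \<alpha>)" "(2 - \<mu>) / (\<alpha> * \<mu>) * (\<mu> / 2) = (2 - \<mu>) / (2 * \<alpha>)"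
    using assms by (simp_all add: field_simps)
  have "sched_coef \<alpha> P N M \<mu> powr (\<mu> / 2) = M powr (1 / (2 * \<alpha>)) * (N / P) powr ((2 - \<mu>) / (2 * \<alpha>))"
    unfolding sched_coef_def powr_mult powr_powr exponents ..
  then show ?thesis
    using assms by (simp add: powr_divide powr_mult)
qed

lemma nn_integral_linear_Icc:
  fixes k m :: real
  assumes "k \<ge> 0" "m \<ge> 0"
  shows "(\<integral>\<^sup>+x. ennreal (k * x) * indicator {0..m} x \<partial>lborel) = ennreal (k * m^2 / 2)"
  using assms
  by (subst nn_integral_FTC_Icc[where F = "\<lambda>x. k * x^2 / 2"]) (auto intro!: derivative_eq_intros)

lemma nn_integral_gaussian_tail:
  fixes k q a :: real
  assumes "k \<ge> 0" "a \<ge> 0" "q > 0"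
  shows "(\<integral>\<^sup>+y. ennreal (k * y * exp (- q * y^2)) * indicator {a..} y \<partial>lborel)
           = ennreal (k / (2 * q) * exp (- q * a^2))"
proof -
  have lim: "((\<lambda>y. - (k / (2 * q)) * exp (- q * y^2)) \<longlongrightarrow> 0) at_top"
    using assms by real_asymp
  have "(\<integral>\<^sup>+y. ennreal (k * y * exp (- q * y^2)) * indicator {a..} y \<partial>lborel)
               = 0 - (- (k / (2 * q)) * exp (- q * a^2))"
    by (rule nn_integral_FTC_atLeast[OF _ _ _ lim]) (use assms in \<open>auto intro!: derivative_eq_intros simp: field_simps\<close>)
  then show ?thesis
    by simp
qed

lemma measure_distributed_pair_iterated_snd:
  fixes X :: "'w \<Rightarrow> real \<times> real"
  assumes "distributed M lborel X f" "S \<in> sets borel"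
    and "\<And>y. (\<integral>\<^sup>+x. f (x, y) * indicator S (x, y) \<partial>lborel) = ennreal (h y)"
    and "h \<in> borel_measurable borel" "\<And>y. 0 \<le> h y"
  shows "measure M (X -` S \<inter> space M) = (\<integral>y. h y \<partial>lborel)"
proof -
  have [measurable]: "f \<in> borel_measurable borel"
    using assms(1) by (simp add: distributed_def)
  have "emeasure M (X -` S \<inter> space M) = (\<integral>\<^sup>+z. f z * indicator S z \<partial>(lborel \<Otimes>\<^sub>M lborel))"
    using distributed_emeasure[OF assms(1)] assms(2) by (simp add: lborel_prod)
  also have "\<dots> = (\<integral>\<^sup>+y. ennreal (h y) \<partial>lborel)"
    using assms(2,3) by (subst lborel_pair.nn_integral_snd[symmetric]) (simp_all add: lborel_prod)
  finally show ?thesis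
    using assms(4,5) by (simp add: measure_def enn2real_nn_integral_eq_integral)
qed

lemma measure_distributed_pair_iterated_fst:
  fixes X :: "'w \<Rightarrow> real \<times> real"
  assumes "distributed M lborel X f" "S \<in> sets borel"
    and "\<And>x. (\<integral>\<^sup>+y. f (x, y) * indicator S (x, y) \<partial>lborel) = ennreal (h x)"
    and "h \<in> borel_measurable borel" "\<And>x. 0 \<le> h x"
  shows "measure M (X -` S \<inter> space M) = (\<integral>x. h x \<partial>lborel)"
proof -
  have [measurable]: "f \<in> borel_measurable borel"
    using assms(1) by (simp add: distributed_def)
  have "emeasure M (X -` S \<inter> space M) = (\<integral>\<^sup>+z. f z * indicator S z \<partial>(lborel \<Otimes>\<^sub>M lborel))"
    using distributed_emeasure[OF assms(1)] assms(2) by (simp add: lborel_prod)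
  also have "\<dots> = (\<integral>\<^sup>+x. ennreal (h x) \<partial>lborel)"
    using assms(2,3) by (subst lborel.nn_integral_fst[symmetric]) (simp_all add: lborel_prod)
  finally show ?thesis
    using assms(4,5) by (simp add: measure_def enn2real_nn_integral_eq_integral)
qed

lemma nn_integral_joint_pdf_le:
  assumes "lb \<ge> 0" "r \<ge> 0"
  shows "(\<integral>\<^sup>+x. joint_pdf lb (x, y) * indicator {..r} x \<partial>lborel)
           = ennreal (indicator {0<..} y * (2 * (pi * lb)^2 * y * exp (- pi * lb * y^2) * (min y r)^2))"
proof (cases "y > 0")
  case False
  then have "(\<lambda>x. joint_pdf lb (x, y) * indicator {..r} x) = (\<lambda>_. 0)"
    by (auto simp: joint_pdf_def fun_eq_iff)
  then show ?thesis
    using False by simp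
next
  case True
  define k where "k = (2 * pi * lb)^2 * y * exp (- pi * lb * y^2)"
  have "AE x in lborel. x \<noteq> y"
    by (rule AE_lborel_singleton)
  then have "AE x in lborel. joint_pdf lb (x, y) * indicator {..r} x = ennreal (k * x) * indicator {0..min y r} x"
    by eventually_elim (auto simp: joint_pdf_def k_def indicator_def mult_ac)
  then have "(\<integral>\<^sup>+x. joint_pdf lb (x, y) * indicator {..r} x \<partial>lborel)
               = (\<integral>\<^sup>+x. ennreal (k * x) * indicator {0..min y r} x \<partial>lborel)"
    by (rule nn_integral_cong_AE)
  also have "\<dots> = ennreal (k * (min y r)^2 / 2)"
    using True assms by (intro nn_integral_linear_Icc) (auto simp: k_def)
  finally show ?thesis
    using True by (simp add: k_def power_mult_distrib)
qed

lemma nn_integral_joint_pdf_ge: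
  assumes "lb > 0" "x > 0"
  shows "(\<integral>\<^sup>+y. joint_pdf lb (x, y) * indicator {t..} y \<partial>lborel)
           = ennreal (2 * pi * lb * x * exp (- pi * lb * (max x t)^2))"
proof -
  define k where "k = (2 * pi * lb)^2 * x"
  have "AE y in lborel. y \<noteq> x"
    by (rule AE_lborel_singleton)
  then have "AE y in lborel. joint_pdf lb (x, y) * indicator {t..} y
               = ennreal (k * y * exp (- (pi * lb) * y^2)) * indicator {max x t..} y"
    by eventually_elim (use assms in \<open>auto simp: joint_pdf_def k_def indicator_def mult_ac\<close>)
  then have "(\<integral>\<^sup>+y. joint_pdf lb (x, y) * indicator {t..} y \<partial>lborel)
               = (\<integral>\<^sup>+y. ennreal (k * y * exp (- (pi * lb) * y^2)) * indicator {max x t..} y \<partial>lborel)"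
    by (rule nn_integral_cong_AE)
  also have "\<dots> = ennreal (k / (2 * (pi * lb)) * exp (- (pi * lb) * (max x t)^2))"
    using assms by (intro nn_integral_gaussian_tail) (auto simp: k_def)
  finally show ?thesis
    using assms by (simp add: k_def power2_eq_square)
qed

lemma measure_joint_pdf_fst_le:
  fixes X11 X21 :: "'w \<Rightarrow> real" and r :: "real \<Rightarrow> real"
  assumes "distributed M lborel (\<lambda>\<omega>. (X11 \<omega>, X21 \<omega>)) (joint_pdf lb)" "lb \<ge> 0"
    and [measurable]: "r \<in> borel_measurable borel" and "\<And>y. r y \<ge> 0"
  shows "measure M {\<omega> \<in> space M. X11 \<omega> \<le> r (X21 \<omega>)}
           = (LINT y:{0<..}|lborel. 2 * (pi * lb)^2 * y * exp (- pi * lb * y^2) * (min y (r y))^2)"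
proof -
  let ?S = "{z :: real \<times> real. fst z \<le> r (snd z)}"
  have "Measurable.pred (borel \<Otimes>\<^sub>M borel) (\<lambda>z :: real \<times> real. fst z \<le> r (snd z))"
    by measurable
  then have "?S \<in> sets borel"
    by (simp add: pred_def borel_prod)
  have "indicator ?S (x, y) = (indicator {..r y} x :: ennreal)" for x y
    by (simp add: indicator_def)
  then have "measure M ((\<lambda>\<omega>. (X11 \<omega>, X21 \<omega>)) -` ?S \<inter> space M)
      = (\<integral>y. indicator {0<..} y * (2 * (pi * lb)^2 * y * exp (- pi * lb * y^2) * (min y (r y))^2) \<partial>lborel)"
    using assms by (intro measure_distributed_pair_iterated_snd[OF assms(1) \<open>?S \<in> sets borel\<close>])
      (simp_all add: nn_integral_joint_pdf_le split: split_indicator)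
  moreover have "(\<lambda>\<omega>. (X11 \<omega>, X21 \<omega>)) -` ?S \<inter> space M = {\<omega> \<in> space M. X11 \<omega> \<le> r (X21 \<omega>)}"
    by auto
  ultimately show ?thesis
    by (simp add: set_lebesgue_integral_def)
qed

lemma measure_joint_pdf_fst_in_le:
  fixes X11 X21 :: "'w \<Rightarrow> real" and r \<sigma> :: "real \<Rightarrow> real"
  assumes "distributed M lborel (\<lambda>\<omega>. (X11 \<omega>, X21 \<omega>)) (joint_pdf lb)" "lb > 0" "B \<in> sets borel"
    and [measurable]: "r \<in> borel_measurable borel" "\<sigma> \<in> borel_measurable borel"
    and threshold: "\<And>x y. 0 < x \<Longrightarrow> x < y \<Longrightarrow> x \<le> r y \<longleftrightarrow> \<sigma> x \<le> y"
  shows "measure M ({\<omega> \<in> space M. X11 \<omega> \<in> B} \<inter> {\<omega> \<in> space M. X11 \<omega> \<le> r (X21 \<omega>)})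
           = (LINT x:B \<inter> {0<..}|lborel. 2 * pi * lb * x * exp (- pi * lb * (max x (\<sigma> x))^2))"
proof -
  let ?S = "{z :: real \<times> real. fst z \<in> B \<and> fst z \<le> r (snd z)}"
  let ?G = "\<lambda>x. 2 * pi * lb * x * exp (- pi * lb * (max x (\<sigma> x))^2)"
  have "Measurable.pred (borel \<Otimes>\<^sub>M borel) (\<lambda>z :: real \<times> real. fst z \<in> B \<and> fst z \<le> r (snd z))"
    using \<open>B \<in> sets borel\<close> by measurable
  then have "?S \<in> sets borel"
    by (simp add: pred_def borel_prod)
  have inner: "(\<integral>\<^sup>+y. joint_pdf lb (x, y) * indicator ?S (x, y) \<partial>lborel)
                 = ennreal (indicator (B \<inter> {0<..}) x * ?G x)" for x
  proof (cases "x \<in> B \<and> x > 0")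
    case True
    then have "(\<lambda>y. joint_pdf lb (x, y) * indicator ?S (x, y)) = (\<lambda>y. joint_pdf lb (x, y) * indicator {\<sigma> x..} y)"
      by (auto simp: fun_eq_iff joint_pdf_def indicator_def threshold)
    then show ?thesis
      using True \<open>lb > 0\<close> by (simp add: nn_integral_joint_pdf_ge)
  next
    case False
    then have "(\<lambda>y. joint_pdf lb (x, y) * indicator ?S (x, y)) = (\<lambda>_. 0)"
      by (auto simp: fun_eq_iff joint_pdf_def)
    then show ?thesis
      using False by simp
  qed
  have "measure M ((\<lambda>\<omega>. (X11 \<omega>, X21 \<omega>)) -` ?S \<inter> space M)
      = (\<integral>x. indicator (B \<inter> {0<..}) x * ?G x \<partial>lborel)"
    using assms(2,3) by (intro measure_distributed_pair_iterated_fst[OF assms(1) \<open>?S \<in> sets borel\<close> inner])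
      (simp_all split: split_indicator)
  moreover have "(\<lambda>\<omega>. (X11 \<omega>, X21 \<omega>)) -` ?S \<inter> space M
      = {\<omega> \<in> space M. X11 \<omega> \<in> B} \<inter> {\<omega> \<in> space M. X11 \<omega> \<le> r (X21 \<omega>)}"
    by auto
  ultimately show ?thesis
    by (simp add: set_lebesgue_integral_def)
qed

theorem lemma2:
  fixes \<Omega> :: "'w measure" and X11 X21 :: "'w \<Rightarrow> real"
    and lb \<alpha> P N M \<mu> :: real
  assumes "lb > 0" and "\<alpha> > 2" and "P > 0" and "N > 0" and "M \<ge> 1"
    and "1 \<le> \<mu>" and "\<mu> \<le> 2"
    and "prob_space \<Omega>"
    and "distributed \<Omega> lborel (\<lambda>\<omega>. (X11 \<omega>, X21 \<omega>)) (joint_pdf lb)"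
  defines "A \<equiv> {\<omega> \<in> space \<Omega>. X11 \<omega> \<le> sched_coef \<alpha> P N M \<mu> * X21 \<omega> powr (2 / \<mu>)}"
  defines "g \<equiv> (\<lambda>x11::real.
      2 * pi * lb * x11 *
      exp (- pi * lb * (max x11 (x11 powr (\<mu> / 2) * (P / N) powr ((2 - \<mu>) / (2 * \<alpha>))
                                   * (1 / M) powr (1 / (2 * \<alpha>))))^2)
      / measure \<Omega> A)"
  shows "measure \<Omega> A =
           (LINT x21:{0<..}|lborel. 2 * (pi * lb)^2 * x21 * exp (- pi * lb * x21^2)
               * (min x21 (sched_coef \<alpha> P N M \<mu> * x21 powr (2 / \<mu>)))^2)
         \<and> (\<forall>B \<in> sets borel.
           measure \<Omega> ({\<omega> \<in> space \<Omega>. X11 \<omega> \<in> B} \<inter> A) / measure \<Omega> A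
             = (LINT x11:(B \<inter> {0<..})|lborel. g x11))"
proof -
  let ?c = "sched_coef \<alpha> P N M \<mu>"
  define \<sigma> where "\<sigma> = (\<lambda>x::real. x powr (\<mu> / 2) * (P / N) powr ((2 - \<mu>) / (2 * \<alpha>))
                                   * (1 / M) powr (1 / (2 * \<alpha>)))"
  have "?c > 0"
    using assms by (simp add: sched_coef_def)
  have threshold: "x \<le> ?c * y powr (2 / \<mu>) \<longleftrightarrow> \<sigma> x \<le> y" if "0 < x" "x < y" for x y
    using le_mult_powr_iff[of x y ?c "2 / \<mu>"] divide_sched_coef_powr[of x \<alpha> P N M \<mu>] that assms \<open>?c > 0\<close>
    by (simp add: \<sigma>_def)
  have "measure \<Omega> A = (LINT x21:{0<..}|lborel. 2 * (pi * lb)^2 * x21 * exp (- pi * lb * x21^2)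
                           * (min x21 (?c * x21 powr (2 / \<mu>)))^2)"
    unfolding A_def using assms(1,9) \<open>?c > 0\<close> by (intro measure_joint_pdf_fst_le) auto
  moreover have "measure \<Omega> ({\<omega> \<in> space \<Omega>. X11 \<omega> \<in> B} \<inter> A) / measure \<Omega> A
                   = (LINT x11:(B \<inter> {0<..})|lborel. g x11)" if "B \<in> sets borel" for B
  proof -
    have "measure \<Omega> ({\<omega> \<in> space \<Omega>. X11 \<omega> \<in> B} \<inter> A)
            = (LINT x:B \<inter> {0<..}|lborel. 2 * pi * lb * x * exp (- pi * lb * (max x (\<sigma> x))^2))"
      unfolding A_def using assms(1,9) that threshold
      by (intro measure_joint_pdf_fst_in_le) (auto simp: \<sigma>_def)
    then show ?thesis
      unfolding g_def \<sigma>_def by simp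
  qed
  ultimately show ?thesis
    by blast
qed

end
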